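(* Let $H$ be a non-abelian finite $p$-group with cyclic centre (so $H$ is monolithic), and let $C$ be a finite $p$-group of order $n$. Let $W=H\wr C$ be the regular wreath product with base group $B=H^n$, let $Z=Z(H)^n$ and $F=\{(x_1,\dots,x_n)\in Z: x_1x_2\cdots x_n=1\}$ (a normal subgroup of $W$). Then the wreath-central product $J=W/F$ satisfies $Z(J)\cong Z(H)$; hence $J$ is monolithic.
   Context: A group is monolithic if the intersection of all its nontrivial normal subgroups is nontrivial. *)

theory Defs
  imports "HOL-Algebra.Algebra"
begin

definition center :: "('a, 'b) monoid_scheme \<Rightarrow> 'a set" where
  "center G = {z \<in> carrier G. \<forall>g \<in> carrier G. z \<otimes>\<^bsub>G\<^esub> g = g \<otimes>\<^bsub>G\<^esub> z}"

definition center_group :: "('a, 'b) monoid_scheme \<Rightarrow> ('a, 'b) monoid_scheme" where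
  "center_group G = G\<lparr>carrier := center G\<rparr>"

definition p_group :: "nat \<Rightarrow> ('a, 'b) monoid_scheme \<Rightarrow> bool" where
  "p_group p G \<longleftrightarrow> group G \<and> Factorial_Ring.prime p \<and> finite (carrier G) \<and> (\<exists>k. order G = p ^ k)"

definition monolithic :: "('a, 'b) monoid_scheme \<Rightarrow> bool" where
  "monolithic G \<longleftrightarrow>
     \<Inter> {N. N \<lhd> G \<and> N \<noteq> {\<one>\<^bsub>G\<^esub>}} \<noteq> {\<one>\<^bsub>G\<^esub>}"

(* regular (right) wreath product H wr C with base group H^{carrier C}:
   elements (f, c) with f : carrier C \<rightarrow> carrier H (extensional), c \<in> carrier C;
   (f, c)(g, d) = (\<lambda>x. f x \<cdot> g (x c), c d). *)
definition wreath :: "('a, 'b) monoid_scheme \<Rightarrow> ('c, 'd) monoid_scheme \<Rightarrow> (('c \<Rightarrow> 'a) \<times> 'c) monoid" where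
  "wreath H C = \<lparr> carrier = (carrier C \<rightarrow>\<^sub>E carrier H) \<times> carrier C,
     monoid.mult = (\<lambda>(f, c) (g, d). ((\<lambda>x\<in>carrier C. f x \<otimes>\<^bsub>H\<^esub> g (x \<otimes>\<^bsub>C\<^esub> c)), c \<otimes>\<^bsub>C\<^esub> d)),
     one = ((\<lambda>x\<in>carrier C. \<one>\<^bsub>H\<^esub>), \<one>\<^bsub>C\<^esub>) \<rparr>"

definition wreath_F :: "('a, 'b) monoid_scheme \<Rightarrow> ('c, 'd) monoid_scheme \<Rightarrow> (('c \<Rightarrow> 'a) \<times> 'c) set" where
  "wreath_F H C = {(f, \<one>\<^bsub>C\<^esub>) | f. f \<in> carrier C \<rightarrow>\<^sub>E center H \<and>
                     finprod (center_group H) f (carrier C) = \<one>\<^bsub>H\<^esub>}"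

end

theory Submission
  imports Defs
begin

text \<open>
  The centre of \<open>J = W/F\<close> is the image of the embedding \<open>a \<mapsto> F (\<delta>\<^sub>a, 1)\<close> of
  \<open>Z(H)\<close>, where \<open>\<delta>\<^sub>a\<close> is \<open>a\<close> at the identity of \<open>C\<close> and \<open>1\<close> elsewhere.
  Modulo \<open>F\<close> a central base element is determined by the product of its coordinates,
  and conjugation by \<open>W\<close> only permutes the coordinates, so the embedding is an
  injective homomorphism into \<open>Z(J)\<close>. Conversely, let \<open>F (f, c)\<close> be central. Commuting
  \<open>(f, c)\<close> with the base element that is a non-central \<open>h \<in> H\<close> at coordinate \<open>c\<close> and
  \<open>1\<close> elsewhere forces \<open>c = 1\<close>. Commuting it with a base element supported at a single
  coordinate \<open>y\<close> forces the correcting element of \<open>F\<close> to be concentrated at \<open>y\<close>,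
  hence trivial, so that \<open>f(y)\<close> is central. Thus \<open>Z(J) \<cong> Z(H)\<close> is cyclic.

  Since \<open>J\<close> is a \<open>p\<close>-group, the class equation shows that every nontrivial normal
  subgroup meets \<open>Z(J)\<close> nontrivially, and every nontrivial subgroup of the cyclic
  \<open>p\<close>-group \<open>Z(J)\<close> contains its subgroup of order \<open>p\<close>; that subgroup therefore lies in
  every nontrivial normal subgroup of \<open>J\<close>.
\<close>

section \<open>Centres of finite \<open>p\<close>-groups\<close>

lemma prime_dvd_of_dvd_prime_power:
  fixes p d :: nat
  assumes "Factorial_Ring.prime p" "d dvd p ^ k" "d \<noteq> 1"
  shows "p dvd d"
  using assms by (metis divides_primepow_nat dvd_power le_zero_eq not_le power_0)

definition conj_action :: "('a, 'b) monoid_scheme \<Rightarrow> 'a \<Rightarrow> 'a \<Rightarrow> 'a" where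
  "conj_action G g = (\<lambda>h\<in>carrier G. g \<otimes>\<^bsub>G\<^esub> h \<otimes>\<^bsub>G\<^esub> inv\<^bsub>G\<^esub> g)"

context group
begin

lemma center_subset: "center G \<subseteq> carrier G"
  by (auto simp: center_def)

lemma center_commute: "a \<in> center G \<Longrightarrow> g \<in> carrier G \<Longrightarrow> a \<otimes> g = g \<otimes> a"
  by (auto simp: center_def)

lemma center_subgroup: "subgroup (center G) G"
proof (rule subgroupI)
  show "center G \<noteq> {}" by (auto simp: center_def)
next
  fix a assume a: "a \<in> center G"
  then have aG: "a \<in> carrier G" by (auto simp: center_def)
  have "inv a \<otimes> g = g \<otimes> inv a" if g: "g \<in> carrier G" for g
  proof -
    have "inv a \<otimes> g = inv a \<otimes> (g \<otimes> a) \<otimes> inv a"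
      using aG g by (simp add: m_assoc)
    also have "\<dots> = g \<otimes> inv a"
      using a aG g by (simp add: center_commute[symmetric] m_assoc[symmetric])
    finally show ?thesis .
  qed
  with aG show "inv a \<in> center G" by (auto simp: center_def)
next
  fix a b assume a: "a \<in> center G" and b: "b \<in> center G"
  then have aG: "a \<in> carrier G" and bG: "b \<in> carrier G"
    by (auto simp: center_def)
  have "a \<otimes> b \<otimes> g = g \<otimes> (a \<otimes> b)" if g: "g \<in> carrier G" for g
  proof -
    have "a \<otimes> b \<otimes> g = a \<otimes> (g \<otimes> b)"
      using aG bG g by (simp add: m_assoc center_commute[OF b g])
    also have "\<dots> = g \<otimes> (a \<otimes> b)"
      using aG bG g by (simp add: m_assoc[symmetric] center_commute[OF a g])
    finally show ?thesis .
  qed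
  with aG bG show "a \<otimes> b \<in> center G"
    by (auto simp: center_def)
qed (auto simp: center_def)

lemma center_closed:
  shows one_in_center: "\<one> \<in> center G"
    and mult_in_center: "a \<in> center G \<Longrightarrow> b \<in> center G \<Longrightarrow> a \<otimes> b \<in> center G"
    and inv_in_center: "a \<in> center G \<Longrightarrow> inv a \<in> center G"
  by (simp_all add: subgroup.one_closed subgroup.m_closed subgroup.m_inv_closed center_subgroup)

lemma comm_group_center_group: "comm_group (center_group G)"
proof -
  interpret Z: group "center_group G"
    unfolding center_group_def by (rule subgroup_imp_group[OF center_subgroup])
  show ?thesis
    by (rule Z.group_comm_groupI) (simp add: center_group_def center_commute subsetD[OF center_subset])
qed

lemma center_eq_carrier_iff: "center G = carrier G \<longleftrightarrow> comm_group G"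
proof
  assume "center G = carrier G"
  then show "comm_group G"
    by (intro group_comm_groupI) (auto simp: center_def)
next
  assume "comm_group G"
  then interpret comm_group G .
  show "center G = carrier G"
    by (auto simp: center_def m_comm)
qed

lemma group_action_conj_action: "group_action G (carrier G) (conj_action G)"
  unfolding conj_action_def by (rule action_by_conjugation)

lemma orbit_conj_action:
  "x \<in> carrier G \<Longrightarrow> orbit G (conj_action G) x = {g \<otimes> x \<otimes> inv g | g. g \<in> carrier G}"
  by (auto simp: orbit_def conj_action_def)

lemma conj_in_center_iff:
  assumes g: "g \<in> carrier G" and x: "x \<in> carrier G"
  shows "g \<otimes> x \<otimes> inv g \<in> center G \<longleftrightarrow> x \<in> center G"
proof
  assume y: "g \<otimes> x \<otimes> inv g \<in> center G"
  have "x = inv g \<otimes> ((g \<otimes> x \<otimes> inv g) \<otimes> g)"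
    using g x by (simp add: m_assoc[symmetric]) (simp add: m_assoc)
  also have "\<dots> = g \<otimes> x \<otimes> inv g"
    using g x by (simp add: center_commute[OF y g] m_assoc[symmetric])
  finally show "x \<in> center G"
    using y by simp
next
  assume x_center: "x \<in> center G"
  have "g \<otimes> x \<otimes> inv g = x"
    using g x by (simp add: center_commute[OF x_center g, symmetric] m_assoc)
  with x_center show "g \<otimes> x \<otimes> inv g \<in> center G"
    by simp
qed

lemma prime_dvd_card_conj_orbit:
  assumes p: "Factorial_Ring.prime p" and ord: "order G = p ^ k"
    and x: "x \<in> carrier G" "x \<notin> center G"
  shows "p dvd card (orbit G (conj_action G) x)"
proof (rule prime_dvd_of_dvd_prime_power[OF p])
  interpret group_action G "carrier G" "conj_action G"
    by (rule group_action_conj_action)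
  show "card (orbit G (conj_action G) x) dvd p ^ k"
    by (rule dvdI[where k = "card (stabilizer G (conj_action G) x)"])
       (simp add: orbit_stabilizer_theorem[OF x(1)] ord)
  show "card (orbit G (conj_action G) x) \<noteq> 1"
  proof
    assume "card (orbit G (conj_action G) x) = 1"
    then have "orbit G (conj_action G) x = {x}"
      using orbit_refl[OF x(1)] by (auto simp: card_1_singleton_iff)
    then have conj_eq: "g \<otimes> x \<otimes> inv g = x" if "g \<in> carrier G" for g
      using that x(1) by (auto simp: orbit_conj_action)
    have "x \<otimes> g = g \<otimes> x" if g: "g \<in> carrier G" for g
    proof -
      have "x \<otimes> g = g \<otimes> x \<otimes> inv g \<otimes> g"
        by (simp add: conj_eq[OF g])
      also have "\<dots> = g \<otimes> x"
        using g x(1) by (simp add: m_assoc)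
      finally show ?thesis .
    qed
    then have "x \<in> center G"
      using x(1) by (simp add: center_def)
    with x(2) show False ..
  qed
qed

lemma prime_dvd_card_normal_diff_center:
  assumes p: "Factorial_Ring.prime p" and ord: "order G = p ^ k" and N: "N \<lhd> G"
  shows "p dvd card (N - center G)"
proof -
  interpret group_action G "carrier G" "conj_action G"
    by (rule group_action_conj_action)
  have N_sub: "N \<subseteq> carrier G"
    using N normal_imp_subgroup subgroup.subset by blast
  have orbit_sub: "orbit G (conj_action G) x \<subseteq> N - center G" if x: "x \<in> N - center G" for x
  proof -
    have "x \<in> carrier G"
      using x N_sub by blast
    then show ?thesis
      using x N by (auto simp: orbit_conj_action conj_in_center_iff normal.inv_op_closed2)
  qed
  have "\<Union> (orbit G (conj_action G) ` (N - center G)) = N - center G"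
    using orbit_sub orbit_refl N_sub by blast
  moreover have "p dvd card (\<Union> (orbit G (conj_action G) ` (N - center G)))"
  proof (rule dvd_partition)
    have "finite (carrier G)"
      using ord p order_gt_0_iff_finite prime_gt_0_nat by fastforce
    then show "finite (\<Union> (orbit G (conj_action G) ` (N - center G)))"
      by (rule finite_subset[rotated]) (use orbit_sub N_sub in blast)
    show "\<forall>A\<in>orbit G (conj_action G) ` (N - center G). p dvd card A"
      using prime_dvd_card_conj_orbit[OF p ord] N_sub by blast
    show "\<forall>A1\<in>orbit G (conj_action G) ` (N - center G). \<forall>A2\<in>orbit G (conj_action G) ` (N - center G).
            A1 \<noteq> A2 \<longrightarrow> A1 \<inter> A2 = {}"
      using disjoint_union N_sub by (auto simp: orbits_def)
  qed
  ultimately show ?thesis by simp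
qed

lemma p_group_normal_meets_center:
  assumes p: "Factorial_Ring.prime p" and ord: "order G = p ^ k"
    and N: "N \<lhd> G" and nontrivial: "N \<noteq> {\<one>}"
  shows "\<exists>x\<in>N \<inter> center G. x \<noteq> \<one>"
proof (rule ccontr)
  assume "\<not> ?thesis"
  moreover have N_subgroup: "subgroup N G"
    using N normal_imp_subgroup by blast
  ultimately have N_center: "N \<inter> center G = {\<one>}"
    using subgroup.one_closed[OF N_subgroup] one_in_center by blast
  have "finite (carrier G)"
    using ord p order_gt_0_iff_finite prime_gt_0_nat by fastforce
  then have fin: "finite N"
    using subgroup.subset[OF N_subgroup] finite_subset by blast
  have "card N dvd p ^ k"
    by (rule dvdI[where k = "card (rcosets N)"])
       (simp add: lagrange[OF N_subgroup, symmetric] ord[symmetric] mult.commute)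
  moreover have "card N \<noteq> 1"
    using nontrivial subgroup.one_closed[OF N_subgroup] by (auto simp: card_1_singleton_iff)
  ultimately have "p dvd card N"
    by (rule prime_dvd_of_dvd_prime_power[OF p])
  moreover have "card N = card (N - center G) + card (N \<inter> center G)"
    using card_Int_Diff[OF fin, of "center G"] by linarith
  ultimately have "p dvd card (N \<inter> center G)"
    using prime_dvd_card_normal_diff_center[OF p ord N] by (simp add: dvd_add_right_iff)
  with N_center p show False
    by simp
qed

lemma cyclic_socle_is_power:
  assumes p: "Factorial_Ring.prime p" and a: "a \<in> carrier G" and ord: "ord a = p ^ Suc e"
    and x: "x = a [^] (t :: int)" "x \<noteq> \<one>"
  shows "\<exists>k :: int. a [^] int (p ^ e) = x [^] k"
proof -
  define m where "m = int (p ^ Suc e)"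
  obtain u v where bezout: "u * t + v * m = gcd t m"
    using bezout_int by blast
  have "Factorial_Ring.prime (int p)"
    using p by simp
  then obtain j where j: "j \<le> Suc e" "gcd t m = int p ^ j"
    using divides_primepow[of "int p" "gcd t m" "Suc e"] unfolding m_def by auto
  have "j \<noteq> Suc e"
  proof
    assume "j = Suc e"
    then have "m dvd t"
      using j(2) unfolding m_def by (metis gcd_dvd1 of_nat_power)
    then show False
      using x a int_pow_eq_id ord unfolding m_def by simp
  qed
  with j have j_le: "j \<le> e" and gcd_eq: "gcd t m = int p ^ j"
    by simp_all
  \<comment> \<open>\<open>u * t \<equiv> p ^ j\<close> modulo \<open>ord a\<close>, so \<open>x [^] (u * p ^ (e - j)) = a [^] p ^ e\<close>\<close>
  define k where "k = u * int p ^ (e - j)"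
  have "t * k = (u * t) * int p ^ (e - j)"
    unfolding k_def by (simp add: ac_simps)
  also have "u * t = gcd t m - v * m"
    using bezout by linarith
  also have "(gcd t m - v * m) * int p ^ (e - j) = int (p ^ e) - v * m * int p ^ (e - j)"
    using gcd_eq j_le by (simp add: left_diff_distrib power_add[symmetric])
  finally have "t * k = int (p ^ e) - v * m * int p ^ (e - j)" .
  then have "int (p ^ e) - t * k = m * (v * int p ^ (e - j))"
    by (simp add: algebra_simps)
  then have "a [^] (t * k) = a [^] int (p ^ e)"
    unfolding int_pow_eq[OF a] ord m_def[symmetric] by simp
  then have "a [^] int (p ^ e) = x [^] k"
    using a by (simp add: x(1) int_pow_pow)
  then show ?thesis ..
qed

lemma cyclic_center_generator:
  assumes "cyclic_group (center_group G)"
  obtains a where "a \<in> center G" "center G = range (\<lambda>n :: int. a [^] n)"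
proof -
  interpret Z: comm_group "center_group G"
    by (rule comm_group_center_group)
  obtain a where "a \<in> carrier (center_group G)"
    and "carrier (center_group G) = range (\<lambda>n :: int. a [^]\<^bsub>center_group G\<^esub> n)"
    using assms Z.cyclic_group by blast
  then have a: "a \<in> center G" and "center G = range (\<lambda>n :: int. a [^]\<^bsub>center_group G\<^esub> n)"
    by (simp_all add: center_group_def)
  moreover have "a [^]\<^bsub>center_group G\<^esub> n = a [^] n" for n :: int
    unfolding center_group_def using int_pow_consistent[OF center_subgroup a] by simp
  ultimately show ?thesis
    using that by simp
qed

lemma cyclic_center_socle_in_normal:
  assumes p: "Factorial_Ring.prime p" and ord_G: "order G = p ^ k"
    and gen: "center G = range (\<lambda>n :: int. a [^] n)" and a: "a \<in> carrier G"
    and ord_a: "ord a = p ^ Suc e"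
    and N: "N \<lhd> G" "N \<noteq> {\<one>}"
  shows "a [^] int (p ^ e) \<in> N"
proof -
  obtain x where x: "x \<in> N \<inter> center G" "x \<noteq> \<one>"
    using p_group_normal_meets_center[OF p ord_G N] by blast
  then obtain t :: int where "x = a [^] t"
    using gen by auto
  then obtain k :: int where "a [^] int (p ^ e) = x [^] k"
    using cyclic_socle_is_power[OF p a ord_a] x by blast
  then show ?thesis
    using subgroup_int_pow_closed[OF normal_imp_subgroup[OF N(1)]] x by simp
qed

end

lemma p_group_cyclic_center_monolithic:
  fixes G (structure)
  assumes G: "p_group p G" and cyclic: "cyclic_group (center_group G)"
    and nontrivial: "carrier G \<noteq> {\<one>}"
  shows "monolithic G"
proof -
  interpret group G
    using G by (simp add: p_group_def)
  obtain k where p: "Factorial_Ring.prime p" and ord_G: "order G = p ^ k"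
    using G by (auto simp: p_group_def)
  obtain a where a: "a \<in> center G" and gen: "center G = range (\<lambda>n :: int. a [^] n)"
    using cyclic_center_generator[OF cyclic] by blast
  have aG: "a \<in> carrier G"
    using a center_subset by blast
  have "ord a dvd p ^ k"
    using ord_dvd_group_order[OF aG] ord_G by simp
  then obtain m where ord_a: "ord a = p ^ m"
    using divides_primepow_nat[OF p] by blast
  have "m \<noteq> 0"
  proof
    assume "m = 0"
    then have "a = \<one>"
      using ord_a ord_eq_1[OF aG] by simp
    then have "center G = {\<one>}"
      using gen by auto
    then show False
      using p_group_normal_meets_center[OF p ord_G normal_self nontrivial] by blast
  qed
  then obtain e where e: "ord a = p ^ Suc e"
    using ord_a not0_implies_Suc by blast
  have "\<not> p ^ Suc e dvd p ^ e"
    using prime_gt_1_nat[OF p] by (simp add: nat_dvd_not_less)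
  then have "a [^] int (p ^ e) \<noteq> \<one>"
    unfolding int_pow_eq_id[OF aG] e by simp
  moreover have "a [^] int (p ^ e) \<in> \<Inter> {N. N \<lhd> G \<and> N \<noteq> {\<one>}}"
    using cyclic_center_socle_in_normal[OF p ord_G gen aG e] by blast
  ultimately show ?thesis
    unfolding monolithic_def by blast
qed

lemma p_group_FactGroup:
  assumes G: "p_group p G" and N: "N \<lhd> G"
  shows "p_group p (G Mod N)"
proof -
  interpret normal N G by (rule N)
  obtain k where p: "Factorial_Ring.prime p" and ord_G: "order G = p ^ k"
    using G by (auto simp: p_group_def)
  have "order (G Mod N) dvd p ^ k"
    by (rule dvdI[where k = "card N"])
       (simp add: order_def FactGroup_def lagrange[OF subgroup_axioms] ord_G[symmetric])
  then obtain i where i: "order (G Mod N) = p ^ i"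
    using divides_primepow_nat[OF p] by blast
  then have "finite (carrier (G Mod N))"
    using prime_gt_0_nat[OF p] by (intro card_ge_0_finite) (simp add: order_def)
  then show ?thesis
    using factorgroup_is_group p i unfolding p_group_def by blast
qed

lemma (in normal) mult_mem_rcos_if_rcos_central:
  assumes "H #> u \<in> center (G Mod H)" "u \<in> carrier G" "v \<in> carrier G"
  shows "u \<otimes> v \<in> H #> (v \<otimes> u)"
proof -
  have "H #> v \<in> carrier (G Mod H)"
    using assms(3) by (auto simp: carrier_FactGroup)
  then have "(H #> u) <#> (H #> v) = (H #> v) <#> (H #> u)"
    using assms(1) unfolding center_def mult_FactGroup by blast
  then have "H #> (u \<otimes> v) = H #> (v \<otimes> u)"
    using assms(2,3) by (simp add: rcos_sum)
  then show ?thesis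
    using assms(2,3) by (metis rcos_self m_closed subgroup_axioms)
qed

section \<open>The regular wreath product\<close>

locale wreath_product = H: group H + C: group C
  for H :: "('a, 'b) monoid_scheme" and C :: "('c, 'd) monoid_scheme"
begin

abbreviation W where "W \<equiv> wreath H C"

lemma carrier_wreath: "carrier W = (carrier C \<rightarrow>\<^sub>E carrier H) \<times> carrier C"
  by (simp add: wreath_def)

lemma one_wreath: "\<one>\<^bsub>W\<^esub> = ((\<lambda>x\<in>carrier C. \<one>\<^bsub>H\<^esub>), \<one>\<^bsub>C\<^esub>)"
  by (simp add: wreath_def)

lemma mult_wreath:
  "(f, c) \<otimes>\<^bsub>W\<^esub> (g, d) = ((\<lambda>x\<in>carrier C. f x \<otimes>\<^bsub>H\<^esub> g (x \<otimes>\<^bsub>C\<^esub> c)), c \<otimes>\<^bsub>C\<^esub> d)"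
  by (simp add: wreath_def)

lemma mult_wreath_base:
  "(f, \<one>\<^bsub>C\<^esub>) \<otimes>\<^bsub>W\<^esub> (g, \<one>\<^bsub>C\<^esub>) = ((\<lambda>x\<in>carrier C. f x \<otimes>\<^bsub>H\<^esub> g x), \<one>\<^bsub>C\<^esub>)"
  by (simp add: mult_wreath cong: restrict_cong)

lemma mult_wreath_assoc:
  assumes f: "f \<in> carrier C \<rightarrow>\<^sub>E carrier H" "c \<in> carrier C"
    and g: "g \<in> carrier C \<rightarrow>\<^sub>E carrier H" "d \<in> carrier C"
    and h: "h \<in> carrier C \<rightarrow>\<^sub>E carrier H" "e \<in> carrier C"
  shows "(f, c) \<otimes>\<^bsub>W\<^esub> (g, d) \<otimes>\<^bsub>W\<^esub> (h, e) = (f, c) \<otimes>\<^bsub>W\<^esub> ((g, d) \<otimes>\<^bsub>W\<^esub> (h, e))"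
  using f g h
  by (simp add: mult_wreath fun_eq_iff C.m_assoc H.m_assoc PiE_mem[OF f(1)] PiE_mem[OF g(1)] PiE_mem[OF h(1)])

lemma wreath_inverse_closed:
  assumes "f \<in> carrier C \<rightarrow>\<^sub>E carrier H" "c \<in> carrier C"
  shows "((\<lambda>x\<in>carrier C. inv\<^bsub>H\<^esub> f (x \<otimes>\<^bsub>C\<^esub> inv\<^bsub>C\<^esub> c)), inv\<^bsub>C\<^esub> c) \<in> carrier W"
  using assms by (auto simp: carrier_wreath)

lemma wreath_inverse_l_inv:
  assumes "f \<in> carrier C \<rightarrow>\<^sub>E carrier H" "c \<in> carrier C"
  shows "((\<lambda>x\<in>carrier C. inv\<^bsub>H\<^esub> f (x \<otimes>\<^bsub>C\<^esub> inv\<^bsub>C\<^esub> c)), inv\<^bsub>C\<^esub> c) \<otimes>\<^bsub>W\<^esub> (f, c) = \<one>\<^bsub>W\<^esub>"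
  using assms by (simp add: mult_wreath one_wreath fun_eq_iff C.m_assoc PiE_mem[OF assms(1)])

lemma group_wreath: "group W"
proof (rule groupI)
  fix u v w assume uvw_carrier: "u \<in> carrier W" "v \<in> carrier W" "w \<in> carrier W"
  obtain f c g d h e where uvw: "u = (f, c)" "v = (g, d)" "w = (h, e)"
    by fastforce
  have f: "f \<in> carrier C \<rightarrow>\<^sub>E carrier H" "c \<in> carrier C"
    and g: "g \<in> carrier C \<rightarrow>\<^sub>E carrier H" "d \<in> carrier C"
    and h: "h \<in> carrier C \<rightarrow>\<^sub>E carrier H" "e \<in> carrier C"
    using uvw_carrier by (simp_all add: uvw carrier_wreath)
  show "u \<otimes>\<^bsub>W\<^esub> v \<in> carrier W"
    using f g by (simp add: uvw carrier_wreath mult_wreath PiE_mem[OF f(1)] PiE_mem[OF g(1)])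
  show "u \<otimes>\<^bsub>W\<^esub> v \<otimes>\<^bsub>W\<^esub> w = u \<otimes>\<^bsub>W\<^esub> (v \<otimes>\<^bsub>W\<^esub> w)"
    unfolding uvw using f g h by (rule mult_wreath_assoc)
next
  fix u assume u_carrier: "u \<in> carrier W"
  obtain f c where u: "u = (f, c)"
    by fastforce
  have f: "f \<in> carrier C \<rightarrow>\<^sub>E carrier H" "c \<in> carrier C"
    using u_carrier by (simp_all add: u carrier_wreath)
  show "\<one>\<^bsub>W\<^esub> \<otimes>\<^bsub>W\<^esub> u = u"
    using f by (simp add: u mult_wreath one_wreath fun_eq_iff PiE_mem[OF f(1)] PiE_arb[OF f(1)])
  show "\<exists>v\<in>carrier W. v \<otimes>\<^bsub>W\<^esub> u = \<one>\<^bsub>W\<^esub>"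
    using wreath_inverse_closed[OF f] wreath_inverse_l_inv[OF f] u by blast
qed (simp add: one_wreath carrier_wreath)

sublocale W: group W
  by (rule group_wreath)

lemma inv_wreath:
  assumes "f \<in> carrier C \<rightarrow>\<^sub>E carrier H" "c \<in> carrier C"
  shows "inv\<^bsub>W\<^esub> (f, c) = ((\<lambda>x\<in>carrier C. inv\<^bsub>H\<^esub> f (x \<otimes>\<^bsub>C\<^esub> inv\<^bsub>C\<^esub> c)), inv\<^bsub>C\<^esub> c)"
  using W.inv_equality[OF wreath_inverse_l_inv[OF assms] _ wreath_inverse_closed[OF assms]] assms
  by (simp add: carrier_wreath)

definition single :: "'c \<Rightarrow> 'a \<Rightarrow> 'c \<Rightarrow> 'a" where
  "single y a = (\<lambda>x\<in>carrier C. if x = y then a else \<one>\<^bsub>H\<^esub>)"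

lemma single_in_center: "a \<in> center H \<Longrightarrow> single y a \<in> carrier C \<rightarrow>\<^sub>E center H"
  using H.one_in_center by (auto simp: single_def)

lemma mult_central_base:
  assumes g: "g \<in> carrier C \<rightarrow>\<^sub>E carrier H" and d: "d \<in> carrier C"
    and z: "z \<in> carrier C \<rightarrow>\<^sub>E center H"
  shows "(g, d) \<otimes>\<^bsub>W\<^esub> (z, \<one>\<^bsub>C\<^esub>) = ((\<lambda>x\<in>carrier C. z (x \<otimes>\<^bsub>C\<^esub> d)), \<one>\<^bsub>C\<^esub>) \<otimes>\<^bsub>W\<^esub> (g, d)"
proof -
  have "g x \<otimes>\<^bsub>H\<^esub> z (x \<otimes>\<^bsub>C\<^esub> d) = z (x \<otimes>\<^bsub>C\<^esub> d) \<otimes>\<^bsub>H\<^esub> g x" if x: "x \<in> carrier C" for x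
    using H.center_commute[OF PiE_mem[OF z] PiE_mem[OF g x]] d x by simp
  then show ?thesis
    using d by (simp add: mult_wreath fun_eq_iff)
qed

end

lemma p_group_wreath:
  assumes H: "p_group p H" and C: "p_group p C"
  shows "p_group p (wreath H C)"
proof -
  interpret wreath_product H C
    using H C by (simp add: p_group_def wreath_product_def)
  obtain k l where p: "Factorial_Ring.prime p" and fin: "finite (carrier H)" "finite (carrier C)"
    and ord: "order H = p ^ k" "order C = p ^ l"
    using H C by (auto simp: p_group_def)
  have "order W = (p ^ k) ^ (p ^ l) * p ^ l"
    using fin ord by (simp add: order_def carrier_wreath card_cartesian_product card_PiE)
  also have "\<dots> = p ^ (k * p ^ l + l)"
    by (simp add: power_mult power_add)
  finally have "order W = p ^ (k * p ^ l + l)" .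
  moreover have "finite (carrier W)"
    using fin by (simp add: carrier_wreath finite_PiE)
  ultimately show ?thesis
    using p group_wreath unfolding p_group_def by blast
qed

section \<open>The centre of the wreath-central product\<close>

locale finite_wreath_product = wreath_product +
  assumes finite_C: "finite (carrier C)"
begin

abbreviation Z where "Z \<equiv> center_group H"
abbreviation F where "F \<equiv> wreath_F H C"
abbreviation J where "J \<equiv> W Mod F"

sublocale Z: comm_group Z
  by (rule H.comm_group_center_group)

lemma center_group_simps [simp]:
  "carrier Z = center H" "monoid.mult Z = monoid.mult H" "\<one>\<^bsub>Z\<^esub> = \<one>\<^bsub>H\<^esub>"
  by (simp_all add: center_group_def)

lemma finprod_center_mult:
  assumes "z \<in> carrier C \<rightarrow> center H" "w \<in> carrier C \<rightarrow> center H"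
  shows "finprod Z (\<lambda>x\<in>carrier C. z x \<otimes>\<^bsub>H\<^esub> w x) (carrier C)
           = finprod Z z (carrier C) \<otimes>\<^bsub>H\<^esub> finprod Z w (carrier C)"
proof -
  have "finprod Z (\<lambda>x\<in>carrier C. z x \<otimes>\<^bsub>H\<^esub> w x) (carrier C) = finprod Z (\<lambda>x. z x \<otimes>\<^bsub>Z\<^esub> w x) (carrier C)"
    using assms by (intro Z.finprod_cong') (auto intro: H.mult_in_center)
  also have "\<dots> = finprod Z z (carrier C) \<otimes>\<^bsub>Z\<^esub> finprod Z w (carrier C)"
    using assms by (intro Z.finprod_multf) auto
  finally show ?thesis
    by simp
qed

lemma finprod_center_inv:
  assumes z: "z \<in> carrier C \<rightarrow> center H"
  shows "finprod Z (\<lambda>x\<in>carrier C. inv\<^bsub>H\<^esub> z x) (carrier C) = inv\<^bsub>H\<^esub> finprod Z z (carrier C)"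
proof -
  have inv_z: "(\<lambda>x\<in>carrier C. inv\<^bsub>H\<^esub> z x) \<in> carrier C \<rightarrow> center H"
    using z H.inv_in_center by auto
  have "finprod Z (\<lambda>x\<in>carrier C. inv\<^bsub>H\<^esub> z x) (carrier C) \<otimes>\<^bsub>H\<^esub> finprod Z z (carrier C)
          = finprod Z (\<lambda>x\<in>carrier C. inv\<^bsub>H\<^esub> z x \<otimes>\<^bsub>H\<^esub> z x) (carrier C)"
    using finprod_center_mult[OF inv_z z] by (simp cong: restrict_cong)
  also have "\<dots> = \<one>\<^bsub>H\<^esub>"
    using z H.center_subset by (intro Z.finprod_one_eqI[simplified]) auto
  finally have prod: "finprod Z (\<lambda>x\<in>carrier C. inv\<^bsub>H\<^esub> z x) (carrier C) \<otimes>\<^bsub>H\<^esub> finprod Z z (carrier C)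
                        = \<one>\<^bsub>H\<^esub>" .
  have "finprod Z z (carrier C) \<in> carrier H"
       "finprod Z (\<lambda>x\<in>carrier C. inv\<^bsub>H\<^esub> z x) (carrier C) \<in> carrier H"
    using Z.finprod_closed[OF z[folded center_group_simps(1)]]
      Z.finprod_closed[OF inv_z[folded center_group_simps(1)]] H.center_subset by auto
  then show ?thesis
    using H.inv_equality[OF prod] by simp
qed

lemma finprod_center_shift:
  assumes z: "z \<in> carrier C \<rightarrow> center H" and d: "d \<in> carrier C"
  shows "finprod Z (\<lambda>x\<in>carrier C. z (x \<otimes>\<^bsub>C\<^esub> d)) (carrier C) = finprod Z z (carrier C)"
proof -
  have "(\<lambda>x. x \<otimes>\<^bsub>C\<^esub> d) ` carrier C = carrier C"
  proof
    show "(\<lambda>x. x \<otimes>\<^bsub>C\<^esub> d) ` carrier C \<subseteq> carrier C"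
      using d by auto
    show "carrier C \<subseteq> (\<lambda>x. x \<otimes>\<^bsub>C\<^esub> d) ` carrier C"
    proof
      fix y assume y: "y \<in> carrier C"
      then have "y = y \<otimes>\<^bsub>C\<^esub> inv\<^bsub>C\<^esub> d \<otimes>\<^bsub>C\<^esub> d"
        using d by (simp add: C.m_assoc)
      with y d show "y \<in> (\<lambda>x. x \<otimes>\<^bsub>C\<^esub> d) ` carrier C"
        by blast
    qed
  qed
  then have "finprod Z z (carrier C) = finprod Z (\<lambda>x. z (x \<otimes>\<^bsub>C\<^esub> d)) (carrier C)"
    using Z.finprod_reindex[of z "\<lambda>x. x \<otimes>\<^bsub>C\<^esub> d" "carrier C"] z C.inj_on_multc[OF d] by simp
  also have "\<dots> = finprod Z (\<lambda>x\<in>carrier C. z (x \<otimes>\<^bsub>C\<^esub> d)) (carrier C)"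
    using z d by (intro Z.finprod_cong') auto
  finally show ?thesis ..
qed

lemma finprod_center_single:
  assumes "y \<in> carrier C" "a \<in> center H"
  shows "finprod Z (single y a) (carrier C) = a"
proof -
  have "finprod Z (single y a) (carrier C) = finprod Z (\<lambda>x. if x = y then a else \<one>\<^bsub>Z\<^esub>) (carrier C)"
    using assms H.one_in_center by (intro Z.finprod_cong') (auto simp: single_def)
  also have "\<dots> = a"
    using Z.finprod_singleton_swap[of y "carrier C" "\<lambda>_. a"] assms finite_C by simp
  finally show ?thesis .
qed

lemma mem_wreath_F:
  "(z, c) \<in> F \<longleftrightarrow> c = \<one>\<^bsub>C\<^esub> \<and> z \<in> carrier C \<rightarrow>\<^sub>E center H \<and> finprod Z z (carrier C) = \<one>\<^bsub>H\<^esub>"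
  by (auto simp: wreath_F_def)

lemma subgroup_wreath_F: "subgroup F W"
proof (rule W.subgroupI)
  show "F \<subseteq> carrier W"
    using H.center_subset by (auto simp: wreath_F_def carrier_wreath)
  have "(\<lambda>x\<in>carrier C. \<one>\<^bsub>H\<^esub>) \<in> carrier C \<rightarrow>\<^sub>E center H"
    using Z.one_closed by simp
  then have "\<one>\<^bsub>W\<^esub> \<in> F"
    by (auto simp: one_wreath mem_wreath_F intro: Z.finprod_one_eqI[simplified])
  then show "F \<noteq> {}" by blast
next
  fix u assume "u \<in> F"
  then obtain z where u: "u = (z, \<one>\<^bsub>C\<^esub>)" and z: "z \<in> carrier C \<rightarrow>\<^sub>E center H"
    and prod_z: "finprod Z z (carrier C) = \<one>\<^bsub>H\<^esub>"
    by (auto simp: wreath_F_def)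
  have "inv\<^bsub>W\<^esub> u = ((\<lambda>x\<in>carrier C. inv\<^bsub>H\<^esub> z x), \<one>\<^bsub>C\<^esub>)"
    using z H.center_subset inv_wreath[of z "\<one>\<^bsub>C\<^esub>"] unfolding u
    by (auto simp: PiE_def Pi_def cong: restrict_cong)
  then show "inv\<^bsub>W\<^esub> u \<in> F"
    using z prod_z finprod_center_inv[of z] H.inv_in_center
    by (auto simp: mem_wreath_F)
next
  fix u v assume "u \<in> F" "v \<in> F"
  then obtain z w where uv: "u = (z, \<one>\<^bsub>C\<^esub>)" "v = (w, \<one>\<^bsub>C\<^esub>)"
    and zw: "z \<in> carrier C \<rightarrow>\<^sub>E center H" "w \<in> carrier C \<rightarrow>\<^sub>E center H"
    and prods: "finprod Z z (carrier C) = \<one>\<^bsub>H\<^esub>" "finprod Z w (carrier C) = \<one>\<^bsub>H\<^esub>"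
    by (auto simp: wreath_F_def)
  then show "u \<otimes>\<^bsub>W\<^esub> v \<in> F"
    using finprod_center_mult[of z w] H.mult_in_center
    by (auto simp: mult_wreath_base mem_wreath_F)
qed

lemma normal_wreath_F: "F \<lhd> W"
  unfolding W.normal_inv_iff
proof (intro conjI ballI subgroup_wreath_F)
  fix u v assume u: "u \<in> carrier W" and "v \<in> F"
  then obtain z where v: "v = (z, \<one>\<^bsub>C\<^esub>)" and z: "z \<in> carrier C \<rightarrow>\<^sub>E center H"
    and prod_z: "finprod Z z (carrier C) = \<one>\<^bsub>H\<^esub>"
    by (auto simp: wreath_F_def)
  obtain g d where gd: "u = (g, d)"
    by fastforce
  have g: "g \<in> carrier C \<rightarrow>\<^sub>E carrier H" and d: "d \<in> carrier C"
    using u by (simp_all add: gd carrier_wreath)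
  define z' where "z' = (\<lambda>x\<in>carrier C. z (x \<otimes>\<^bsub>C\<^esub> d))"
  have z'F: "(z', \<one>\<^bsub>C\<^esub>) \<in> F"
    using z prod_z finprod_center_shift[of z d] d by (auto simp: mem_wreath_F z'_def)
  have "u \<otimes>\<^bsub>W\<^esub> v = (z', \<one>\<^bsub>C\<^esub>) \<otimes>\<^bsub>W\<^esub> u"
    unfolding gd v z'_def by (rule mult_central_base[OF g d z])
  then have "u \<otimes>\<^bsub>W\<^esub> v \<otimes>\<^bsub>W\<^esub> inv\<^bsub>W\<^esub> u = (z', \<one>\<^bsub>C\<^esub>)"
    using u z'F subgroup.subset[OF subgroup_wreath_F] by (simp add: W.m_assoc subset_iff)
  with z'F show "u \<otimes>\<^bsub>W\<^esub> v \<otimes>\<^bsub>W\<^esub> inv\<^bsub>W\<^esub> u \<in> F"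
    by simp
qed

sublocale J: group J
  by (rule normal.factorgroup_is_group[OF normal_wreath_F])

text \<open>Any coordinate would do for the embedding: modulo \<open>F\<close> only the product of the
  coordinates of a central base element matters.\<close>

definition center_embed :: "'a \<Rightarrow> (('c \<Rightarrow> 'a) \<times> 'c) set" where
  "center_embed a = F #>\<^bsub>W\<^esub> (single \<one>\<^bsub>C\<^esub> a, \<one>\<^bsub>C\<^esub>)"

lemma central_base_in_carrier:
  "z \<in> carrier C \<rightarrow>\<^sub>E center H \<Longrightarrow> (z, \<one>\<^bsub>C\<^esub>) \<in> carrier W"
  using H.center_subset by (auto simp: carrier_wreath)

lemma rcos_central_base_eq:
  assumes z: "z \<in> carrier C \<rightarrow>\<^sub>E center H" and z': "z' \<in> carrier C \<rightarrow>\<^sub>E center H"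
    and prod_eq: "finprod Z z (carrier C) = finprod Z z' (carrier C)"
  shows "F #>\<^bsub>W\<^esub> (z, \<one>\<^bsub>C\<^esub>) = F #>\<^bsub>W\<^esub> (z', \<one>\<^bsub>C\<^esub>)"
proof -
  define w where "w = (\<lambda>x\<in>carrier C. z x \<otimes>\<^bsub>H\<^esub> inv\<^bsub>H\<^esub> z' x)"
  have inv_z': "(\<lambda>x\<in>carrier C. inv\<^bsub>H\<^esub> z' x) \<in> carrier C \<rightarrow> center H"
    using z' H.inv_in_center by auto
  have w: "w \<in> carrier C \<rightarrow>\<^sub>E center H"
    using z z' by (auto simp: w_def intro: H.mult_in_center H.inv_in_center)
  have "finprod Z w (carrier C) = finprod Z z (carrier C) \<otimes>\<^bsub>H\<^esub> inv\<^bsub>H\<^esub> finprod Z z' (carrier C)"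
    using finprod_center_mult[of z "\<lambda>x\<in>carrier C. inv\<^bsub>H\<^esub> z' x"] inv_z' z z'
      finprod_center_inv[of z']
    by (simp add: w_def PiE_iff cong: restrict_cong)
  also have "\<dots> = \<one>\<^bsub>H\<^esub>"
  proof -
    have "finprod Z z' (carrier C) \<in> carrier H"
      using Z.finprod_closed[of z' "carrier C"] z' H.center_subset by (auto simp: PiE_iff)
    then show ?thesis
      by (simp add: prod_eq)
  qed
  finally have wF: "(w, \<one>\<^bsub>C\<^esub>) \<in> F"
    using w by (simp add: mem_wreath_F)
  have "(\<lambda>x\<in>carrier C. w x \<otimes>\<^bsub>H\<^esub> z' x) = (\<lambda>x\<in>carrier C. z x)"
  proof (rule restrict_ext)
    fix x assume x: "x \<in> carrier C"
    show "w x \<otimes>\<^bsub>H\<^esub> z' x = z x"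
      using x subsetD[OF H.center_subset PiE_mem[OF z x]] subsetD[OF H.center_subset PiE_mem[OF z' x]]
      by (simp add: w_def H.m_assoc)
  qed
  then have "(w, \<one>\<^bsub>C\<^esub>) \<otimes>\<^bsub>W\<^esub> (z', \<one>\<^bsub>C\<^esub>) = (z, \<one>\<^bsub>C\<^esub>)"
    using z by (simp add: mult_wreath_base)
  then have "(z, \<one>\<^bsub>C\<^esub>) \<in> F #>\<^bsub>W\<^esub> (z', \<one>\<^bsub>C\<^esub>)"
    using wF central_base_in_carrier[OF z'] subgroup.subset[OF subgroup_wreath_F]
    by (metis W.rcosI)
  then show ?thesis
    using W.repr_independence[OF _ central_base_in_carrier[OF z'] subgroup_wreath_F] by simp
qed

lemma rcos_central_base:
  assumes z: "z \<in> carrier C \<rightarrow>\<^sub>E center H"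
  shows "F #>\<^bsub>W\<^esub> (z, \<one>\<^bsub>C\<^esub>) = center_embed (finprod Z z (carrier C))"
proof -
  have "finprod Z z (carrier C) \<in> center H"
    using Z.finprod_closed[of z "carrier C"] z by auto
  then show ?thesis
    unfolding center_embed_def
    using z single_in_center finprod_center_single[OF C.one_closed]
    by (intro rcos_central_base_eq) auto
qed

lemma center_embed_closed: "a \<in> center H \<Longrightarrow> center_embed a \<in> carrier J"
  unfolding center_embed_def carrier_FactGroup
  using central_base_in_carrier[OF single_in_center] by blast

lemma center_embed_mult:
  assumes a: "a \<in> center H" and b: "b \<in> center H"
  shows "center_embed (a \<otimes>\<^bsub>H\<^esub> b) = center_embed a \<otimes>\<^bsub>J\<^esub> center_embed b"
proof -
  have "(single \<one>\<^bsub>C\<^esub> a, \<one>\<^bsub>C\<^esub>) \<otimes>\<^bsub>W\<^esub> (single \<one>\<^bsub>C\<^esub> b, \<one>\<^bsub>C\<^esub>) = (single \<one>\<^bsub>C\<^esub> (a \<otimes>\<^bsub>H\<^esub> b), \<one>\<^bsub>C\<^esub>)"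
    using a b H.center_subset by (auto simp: mult_wreath_base single_def)
  then show ?thesis
    unfolding center_embed_def
    using normal.rcos_sum[OF normal_wreath_F central_base_in_carrier[OF single_in_center[OF a]]
        central_base_in_carrier[OF single_in_center[OF b]]]
    by simp
qed

lemma center_embed_eq_one:
  assumes a: "a \<in> center H" and one: "center_embed a = \<one>\<^bsub>J\<^esub>"
  shows "a = \<one>\<^bsub>H\<^esub>"
proof -
  have "F #>\<^bsub>W\<^esub> (single \<one>\<^bsub>C\<^esub> a, \<one>\<^bsub>C\<^esub>) = F"
    using one by (simp add: center_embed_def)
  moreover have "(single \<one>\<^bsub>C\<^esub> a, \<one>\<^bsub>C\<^esub>) \<in> F #>\<^bsub>W\<^esub> (single \<one>\<^bsub>C\<^esub> a, \<one>\<^bsub>C\<^esub>)"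
    by (rule W.rcos_self[OF central_base_in_carrier[OF single_in_center[OF a]] subgroup_wreath_F])
  ultimately have "(single \<one>\<^bsub>C\<^esub> a, \<one>\<^bsub>C\<^esub>) \<in> F"
    by simp
  then show ?thesis
    using finprod_center_single[OF C.one_closed a] by (simp add: mem_wreath_F)
qed

lemma center_embed_in_center:
  assumes a: "a \<in> center H"
  shows "center_embed a \<in> center J"
  unfolding center_def
proof (intro CollectI conjI ballI center_embed_closed[OF a])
  fix Q assume "Q \<in> carrier J"
  then obtain g d where Q: "Q = F #>\<^bsub>W\<^esub> (g, d)"
    and g: "g \<in> carrier C \<rightarrow>\<^sub>E carrier H" and d: "d \<in> carrier C"
    by (auto simp: carrier_FactGroup carrier_wreath)
  define s where "s = (\<lambda>x\<in>carrier C. single \<one>\<^bsub>C\<^esub> a (x \<otimes>\<^bsub>C\<^esub> d))"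
  have s: "s \<in> carrier C \<rightarrow>\<^sub>E center H"
    using PiE_mem[OF single_in_center[OF a]] d by (auto simp: s_def)
  have "finprod Z s (carrier C) = a"
    using finprod_center_shift[of "single \<one>\<^bsub>C\<^esub> a" d] single_in_center[OF a] d
      finprod_center_single[OF C.one_closed a]
    by (simp add: s_def PiE_iff)
  then have s_embed: "F #>\<^bsub>W\<^esub> (s, \<one>\<^bsub>C\<^esub>) = center_embed a"
    using rcos_central_base[OF s] by simp
  have gd: "(g, d) \<in> carrier W"
    using g d by (simp add: carrier_wreath)
  have "Q \<otimes>\<^bsub>J\<^esub> center_embed a = F #>\<^bsub>W\<^esub> ((g, d) \<otimes>\<^bsub>W\<^esub> (single \<one>\<^bsub>C\<^esub> a, \<one>\<^bsub>C\<^esub>))"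
    unfolding Q center_embed_def
    using normal.rcos_sum[OF normal_wreath_F gd central_base_in_carrier[OF single_in_center[OF a]]]
    by simp
  also have "\<dots> = F #>\<^bsub>W\<^esub> ((s, \<one>\<^bsub>C\<^esub>) \<otimes>\<^bsub>W\<^esub> (g, d))"
    unfolding s_def by (simp add: mult_central_base[OF g d single_in_center[OF a]])
  also have "\<dots> = center_embed a \<otimes>\<^bsub>J\<^esub> Q"
    unfolding Q s_embed[symmetric]
    using normal.rcos_sum[OF normal_wreath_F central_base_in_carrier[OF s] gd] by simp
  finally show "center_embed a \<otimes>\<^bsub>J\<^esub> Q = Q \<otimes>\<^bsub>J\<^esub> center_embed a"
    by simp
qed

lemma central_rcos_commutation:
  assumes central: "F #>\<^bsub>W\<^esub> (f, c) \<in> center J" and fc: "(f, c) \<in> carrier W"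
    and g: "g \<in> carrier C \<rightarrow>\<^sub>E carrier H" and d: "d \<in> carrier C"
  obtains z where "z \<in> carrier C \<rightarrow>\<^sub>E center H" "finprod Z z (carrier C) = \<one>\<^bsub>H\<^esub>"
    "\<And>x. x \<in> carrier C \<Longrightarrow> f x \<otimes>\<^bsub>H\<^esub> g (x \<otimes>\<^bsub>C\<^esub> c) = z x \<otimes>\<^bsub>H\<^esub> (g x \<otimes>\<^bsub>H\<^esub> f (x \<otimes>\<^bsub>C\<^esub> d))"
proof -
  have gd: "(g, d) \<in> carrier W"
    using g d by (simp add: carrier_wreath)
  have "(f, c) \<otimes>\<^bsub>W\<^esub> (g, d) \<in> F #>\<^bsub>W\<^esub> ((g, d) \<otimes>\<^bsub>W\<^esub> (f, c))"
    by (rule normal.mult_mem_rcos_if_rcos_central[OF normal_wreath_F central fc gd])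
  then obtain z where z: "z \<in> carrier C \<rightarrow>\<^sub>E center H" "finprod Z z (carrier C) = \<one>\<^bsub>H\<^esub>"
    and eq: "(f, c) \<otimes>\<^bsub>W\<^esub> (g, d) = (z, \<one>\<^bsub>C\<^esub>) \<otimes>\<^bsub>W\<^esub> ((g, d) \<otimes>\<^bsub>W\<^esub> (f, c))"
    unfolding r_coset_def wreath_F_def by blast
  have "f x \<otimes>\<^bsub>H\<^esub> g (x \<otimes>\<^bsub>C\<^esub> c) = z x \<otimes>\<^bsub>H\<^esub> (g x \<otimes>\<^bsub>H\<^esub> f (x \<otimes>\<^bsub>C\<^esub> d))"
    if x: "x \<in> carrier C" for x
    using fun_cong[OF arg_cong[where f = fst, OF eq], of x] x by (simp add: mult_wreath)
  with z show ?thesis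
    using that by blast
qed

lemma central_rcos_top_trivial:
  assumes noncomm: "\<not> comm_group H"
    and central: "F #>\<^bsub>W\<^esub> (f, c) \<in> center J" and fc: "(f, c) \<in> carrier W"
  shows "c = \<one>\<^bsub>C\<^esub>"
proof (rule ccontr)
  assume c_ne: "c \<noteq> \<one>\<^bsub>C\<^esub>"
  obtain h where h: "h \<in> carrier H" "h \<notin> center H"
    using noncomm H.center_subset H.center_eq_carrier_iff by blast
  have f1: "f \<one>\<^bsub>C\<^esub> \<in> carrier H" and c: "c \<in> carrier C"
    using fc by (auto simp: carrier_wreath)
  have "single c h \<in> carrier C \<rightarrow>\<^sub>E carrier H"
    using h by (auto simp: single_def)
  then obtain z where z: "z \<in> carrier C \<rightarrow>\<^sub>E center H"
    and eqs: "\<And>x. x \<in> carrier C \<Longrightarrow>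
      f x \<otimes>\<^bsub>H\<^esub> single c h (x \<otimes>\<^bsub>C\<^esub> c) = z x \<otimes>\<^bsub>H\<^esub> (single c h x \<otimes>\<^bsub>H\<^esub> f (x \<otimes>\<^bsub>C\<^esub> \<one>\<^bsub>C\<^esub>))"
    using central_rcos_commutation[OF central fc _ C.one_closed] by metis
  have z1: "z \<one>\<^bsub>C\<^esub> \<in> center H"
    using PiE_mem[OF z C.one_closed] .
  have "f \<one>\<^bsub>C\<^esub> \<otimes>\<^bsub>H\<^esub> h = z \<one>\<^bsub>C\<^esub> \<otimes>\<^bsub>H\<^esub> f \<one>\<^bsub>C\<^esub>"
    using eqs[OF C.one_closed] c c_ne[symmetric] f1 by (simp add: single_def)
  also have "\<dots> = f \<one>\<^bsub>C\<^esub> \<otimes>\<^bsub>H\<^esub> z \<one>\<^bsub>C\<^esub>"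
    using H.center_commute[OF z1 f1] .
  finally have "h = z \<one>\<^bsub>C\<^esub>"
    using h(1) f1 subsetD[OF H.center_subset z1] by simp
  with h(2) z1 show False
    by simp
qed

lemma central_rcos_base_central:
  assumes central: "F #>\<^bsub>W\<^esub> (f, \<one>\<^bsub>C\<^esub>) \<in> center J" and f: "f \<in> carrier C \<rightarrow>\<^sub>E carrier H"
  shows "f \<in> carrier C \<rightarrow>\<^sub>E center H"
proof -
  have f1: "(f, \<one>\<^bsub>C\<^esub>) \<in> carrier W"
    using f by (simp add: carrier_wreath)
  have "f y \<otimes>\<^bsub>H\<^esub> k = k \<otimes>\<^bsub>H\<^esub> f y" if y: "y \<in> carrier C" and k: "k \<in> carrier H" for y k
  proof -
    have "single y k \<in> carrier C \<rightarrow>\<^sub>E carrier H"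
      using k by (auto simp: single_def)
    then obtain z where z: "z \<in> carrier C \<rightarrow>\<^sub>E center H" and prod_z: "finprod Z z (carrier C) = \<one>\<^bsub>H\<^esub>"
      and eqs: "\<And>x. x \<in> carrier C \<Longrightarrow>
        f x \<otimes>\<^bsub>H\<^esub> single y k (x \<otimes>\<^bsub>C\<^esub> \<one>\<^bsub>C\<^esub>) = z x \<otimes>\<^bsub>H\<^esub> (single y k x \<otimes>\<^bsub>H\<^esub> f (x \<otimes>\<^bsub>C\<^esub> \<one>\<^bsub>C\<^esub>))"
      using central_rcos_commutation[OF central f1 _ C.one_closed] by metis
    have "z x = \<one>\<^bsub>H\<^esub>" if x: "x \<in> carrier C" and xy: "x \<noteq> y" for x
    proof -
      have "f x = z x \<otimes>\<^bsub>H\<^esub> f x"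
        using eqs[OF x] x xy PiE_mem[OF f x] by (simp add: single_def)
      then show ?thesis
        using PiE_mem[OF f x] subsetD[OF H.center_subset PiE_mem[OF z x]] H.r_cancel_one' by blast
    qed
    then have "z = single y (z y)"
      using z PiE_arb[OF z] by (auto simp: single_def fun_eq_iff)
    then have "z y = \<one>\<^bsub>H\<^esub>"
      using finprod_center_single[OF y PiE_mem[OF z y]] prod_z by simp
    then show ?thesis
      using eqs[OF y] y PiE_mem[OF f y] k by (simp add: single_def)
  qed
  then show ?thesis
    using f by (auto simp: center_def)
qed

lemma center_quotient_eq_image:
  assumes noncomm: "\<not> comm_group H"
  shows "center J = center_embed ` center H"
proof
  show "center_embed ` center H \<subseteq> center J"
    using center_embed_in_center by blast
  show "center J \<subseteq> center_embed ` center H"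
  proof
    fix P assume P: "P \<in> center J"
    then obtain f c where Pfc: "P = F #>\<^bsub>W\<^esub> (f, c)" and fc: "(f, c) \<in> carrier W"
      by (auto simp: center_def carrier_FactGroup)
    have c: "c = \<one>\<^bsub>C\<^esub>"
      using central_rcos_top_trivial[OF noncomm _ fc] P Pfc by simp
    have f: "f \<in> carrier C \<rightarrow>\<^sub>E center H"
      using central_rcos_base_central P fc unfolding Pfc c by (simp add: carrier_wreath)
    have "finprod Z f (carrier C) \<in> center H"
      using Z.finprod_closed[of f "carrier C"] f by (auto simp: PiE_iff)
    moreover have "P = center_embed (finprod Z f (carrier C))"
      using rcos_central_base[OF f] Pfc c by simp
    ultimately show "P \<in> center_embed ` center H"
      by blast
  qed
qed

lemma center_embed_iso:
  assumes noncomm: "\<not> comm_group H"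
  shows "center_embed \<in> iso Z (center_group J)"
proof -
  interpret ZJ: comm_group "center_group J"
    by (rule J.comm_group_center_group)
  have hom: "center_embed \<in> hom Z (center_group J)"
    using center_embed_in_center center_embed_mult
    by (auto simp: hom_def center_group_def)
  interpret group_hom Z "center_group J" center_embed
    using hom by unfold_locales
  show ?thesis
    unfolding iso_iff using center_quotient_eq_image[OF noncomm] center_embed_eq_one
    by (auto simp: center_group_def)
qed

end

theorem theorem4p2:
  fixes H :: "('a, 'b) monoid_scheme" and C :: "('c, 'd) monoid_scheme" and p n :: nat
  assumes "p_group p H" and "\<not> comm_group H"
    and "cyclic_group (center_group H)"
    and "p_group p C" and "order C = n"
  shows "wreath_F H C \<lhd> wreath H C
         \<and> center_group (wreath H C Mod wreath_F H C) \<cong> center_group H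
         \<and> monolithic (wreath H C Mod wreath_F H C)"
proof -
  interpret finite_wreath_product H C
    using assms(1,4) by (simp add: p_group_def finite_wreath_product_def
        finite_wreath_product_axioms_def wreath_product_def)
  interpret ZJ: comm_group "center_group J"
    by (rule J.comm_group_center_group)
  have iso: "center_group H \<cong> center_group J"
    using is_isoI[OF center_embed_iso[OF assms(2)]] .
  then have cyclic: "cyclic_group (center_group J)"
    using isomorphic_group_cyclicity Z.is_group ZJ.is_group assms(3) by blast
  obtain k where ord_H: "order H = p ^ k" and p: "Factorial_Ring.prime p"
    using assms(1) by (auto simp: p_group_def)
  have "center H \<noteq> carrier H"
    using assms(2) H.center_eq_carrier_iff by simp
  then have "carrier H \<noteq> {\<one>\<^bsub>H\<^esub>}"
    using H.one_in_center H.center_subset by auto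
  then obtain s where s: "s \<in> center H" "s \<noteq> \<one>\<^bsub>H\<^esub>"
    using H.p_group_normal_meets_center[OF p ord_H H.normal_self] by blast
  then have "carrier J \<noteq> {\<one>\<^bsub>J\<^esub>}"
    using center_embed_closed center_embed_eq_one by blast
  then have "monolithic J"
    using p_group_cyclic_center_monolithic p_group_FactGroup[OF p_group_wreath[OF assms(1,4)]]
      normal_wreath_F cyclic by blast
  then show ?thesis
    using normal_wreath_F Z.iso_sym[OF iso] by blast
qed

end
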